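(* Let $\mathcal{R}$ be a finite set of axis-parallel rectangles in the plane. Then the piercing graph $H$ of $\mathcal{R}$ is a comparability graph.
   Context: The piercing graph $H=(\mathcal{R},E)$ has an edge $\{R_1,R_2\}$ iff $R_1$ and $R_2$ pierce, i.e., they intersect but neither contains a corner of the other. A graph on vertex set $V$ is a comparability graph if it is obtained from (the transitive closure of) a partial order on $V$ by joining every pair of comparable elements and forgetting directions. *)

theory Defs
  imports Complex_Main
begin

definition rect :: "real \<Rightarrow> real \<Rightarrow> real \<Rightarrow> real \<Rightarrow> (real \<times> real) set" where
  "rect a b c d = {a..b} \<times> {c..d}"

definition is_rect :: "(real \<times> real) set \<Rightarrow> bool" where
  "is_rect S \<longleftrightarrow> (\<exists>a b c d. a < b \<and> c < d \<and> S = rect a b c d)"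

definition corners :: "(real \<times> real) set \<Rightarrow> (real \<times> real) set" where
  "corners S = {(x, y). \<exists>a b c d. a < b \<and> c < d \<and> S = rect a b c d \<and> x \<in> {a, b} \<and> y \<in> {c, d}}"

definition pierce :: "(real \<times> real) set \<Rightarrow> (real \<times> real) set \<Rightarrow> bool" where
  "pierce R1 R2 \<longleftrightarrow> R1 \<inter> R2 \<noteq> {} \<and> corners R1 \<inter> R2 = {} \<and> corners R2 \<inter> R1 = {}"

definition piercing_edge :: "(real \<times> real) set set \<Rightarrow> (real \<times> real) set \<Rightarrow> (real \<times> real) set \<Rightarrow> bool" where
  "piercing_edge \<R> R1 R2 \<longleftrightarrow> R1 \<in> \<R> \<and> R2 \<in> \<R> \<and> R1 \<noteq> R2 \<and> pierce R1 R2"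

definition comparability_graph :: "'a set \<Rightarrow> ('a \<Rightarrow> 'a \<Rightarrow> bool) \<Rightarrow> bool" where
  "comparability_graph V E \<longleftrightarrow>
     (\<exists>P :: 'a \<Rightarrow> 'a \<Rightarrow> bool.
        (\<forall>x\<in>V. \<not> P x x) \<and>
        (\<forall>x\<in>V. \<forall>y\<in>V. \<forall>z\<in>V. P x y \<longrightarrow> P y z \<longrightarrow> P x z) \<and>
        (\<forall>x\<in>V. \<forall>y\<in>V. x \<noteq> y \<longrightarrow> (E x y \<longleftrightarrow> P x y \<or> P y x)))"

end

theory Submission
  imports Defs
begin

text \<open>Two rectangles pierce exactly when they form a cross: one is strictly wider and strictly less
  tall than the other, so that its horizontal extent contains the other's in its interior and
  its vertical extent lies in the interior of the other's. Orienting every edge of the piercing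
  graph from the horizontal bar of the cross to the vertical one is transitive, because strict
  containment of intervals is.\<close>

lemma rect_eq_iff:
  assumes "a < b" "c < d" "a' < b'" "c' < d'"
  shows "rect a b c d = rect a' b' c' d' \<longleftrightarrow> a = a' \<and> b = b' \<and> c = c' \<and> d = d'"
  using assms by (auto simp: rect_def times_eq_iff)

lemma corners_rect:
  assumes "a < b" "c < d"
  shows "corners (rect a b c d) = {a, b} \<times> {c, d}"
  using assms rect_eq_iff[OF assms] unfolding corners_def by blast

lemma pierce_rect_iff:
  assumes "a < b" "c < d" "a' < b'" "c' < d'"
  shows "pierce (rect a b c d) (rect a' b' c' d') \<longleftrightarrow>
    (a < a' \<and> b' < b \<and> c' < c \<and> d < d') \<or> (a' < a \<and> b < b' \<and> c < c' \<and> d' < d)"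
proof -
  have "corners (rect a b c d) \<inter> rect a' b' c' d' = {} \<longleftrightarrow>
     \<not> ((a' \<le> a \<and> a \<le> b' \<or> a' \<le> b \<and> b \<le> b') \<and> (c' \<le> c \<and> c \<le> d' \<or> c' \<le> d \<and> d \<le> d'))"
    unfolding corners_rect[OF assms(1,2)] by (auto simp: rect_def)
  moreover have "corners (rect a' b' c' d') \<inter> rect a b c d = {} \<longleftrightarrow>
     \<not> ((a \<le> a' \<and> a' \<le> b \<or> a \<le> b' \<and> b' \<le> b) \<and> (c \<le> c' \<and> c' \<le> d \<or> c \<le> d' \<and> d' \<le> d))"
    unfolding corners_rect[OF assms(3,4)] by (auto simp: rect_def)
  moreover have "rect a b c d \<inter> rect a' b' c' d' \<noteq> {} \<longleftrightarrow>
     a \<le> b' \<and> a' \<le> b \<and> c \<le> d' \<and> c' \<le> d"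
    using assms by (auto simp: rect_def Times_Int_Times)
  ultimately show ?thesis
    unfolding pierce_def using assms by argo
qed

definition crosses_horizontally :: "(real \<times> real) set \<Rightarrow> (real \<times> real) set \<Rightarrow> bool" where
  "crosses_horizontally R1 R2 \<longleftrightarrow> (\<exists>a b c d a' b' c' d'.
     a < b \<and> c < d \<and> a' < b' \<and> c' < d' \<and> R1 = rect a b c d \<and> R2 = rect a' b' c' d' \<and>
     a < a' \<and> b' < b \<and> c' < c \<and> d < d')"

lemma crosses_horizontally_rect_iff:
  assumes "a < b" "c < d" "a' < b'" "c' < d'"
  shows "crosses_horizontally (rect a b c d) (rect a' b' c' d') \<longleftrightarrow>
    a < a' \<and> b' < b \<and> c' < c \<and> d < d'"
proof
  assume "crosses_horizontally (rect a b c d) (rect a' b' c' d')"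
  then obtain a1 b1 c1 d1 a2 b2 c2 d2 where
    "a1 < b1" "c1 < d1" "a2 < b2" "c2 < d2"
    "rect a b c d = rect a1 b1 c1 d1" "rect a' b' c' d' = rect a2 b2 c2 d2"
    "a1 < a2" "b2 < b1" "c2 < c1" "d1 < d2"
    unfolding crosses_horizontally_def by blast
  then show "a < a' \<and> b' < b \<and> c' < c \<and> d < d'"
    using rect_eq_iff assms by metis
next
  assume "a < a' \<and> b' < b \<and> c' < c \<and> d < d'"
  then show "crosses_horizontally (rect a b c d) (rect a' b' c' d')"
    unfolding crosses_horizontally_def using assms by blast
qed

lemma crosses_horizontally_irrefl: "\<not> crosses_horizontally R R"
  unfolding crosses_horizontally_def by (auto simp: rect_eq_iff)

lemma crosses_horizontally_trans:
  assumes "crosses_horizontally R1 R2" "crosses_horizontally R2 R3"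
  shows "crosses_horizontally R1 R3"
proof -
  obtain a b c d a' b' c' d' where R12:
    "a < b" "c < d" "a' < b'" "c' < d'" "R1 = rect a b c d" "R2 = rect a' b' c' d'"
    "a < a'" "b' < b" "c' < c" "d < d'"
    using assms(1) unfolding crosses_horizontally_def by blast
  obtain a'' b'' c'' d'' where R3:
    "a'' < b''" "c'' < d''" "R3 = rect a'' b'' c'' d''"
    using assms(2) unfolding crosses_horizontally_def by blast
  have "a' < a'' \<and> b'' < b' \<and> c'' < c' \<and> d' < d''"
    using assms(2) R12(3,4,6) R3 by (simp add: crosses_horizontally_rect_iff)
  then show ?thesis
    using R12 R3 by (simp add: crosses_horizontally_rect_iff)
qed

lemma pierce_iff_crosses_horizontally:
  assumes "is_rect R1" "is_rect R2"
  shows "pierce R1 R2 \<longleftrightarrow> crosses_horizontally R1 R2 \<or> crosses_horizontally R2 R1"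
proof -
  obtain a b c d a' b' c' d' where
    "a < b" "c < d" "R1 = rect a b c d" "a' < b'" "c' < d'" "R2 = rect a' b' c' d'"
    using assms unfolding is_rect_def by blast
  then show ?thesis
    by (simp add: pierce_rect_iff crosses_horizontally_rect_iff)
qed

lemma comparability_graph_piercing_edge:
  assumes "\<forall>R\<in>\<R>. is_rect R"
  shows "comparability_graph \<R> (piercing_edge \<R>)"
  unfolding comparability_graph_def
proof (intro exI[of _ crosses_horizontally] conjI ballI impI)
  show "\<not> crosses_horizontally R R" for R
    by (rule crosses_horizontally_irrefl)
  show "crosses_horizontally R1 R3"
    if "crosses_horizontally R1 R2" "crosses_horizontally R2 R3" for R1 R2 R3
    using that by (rule crosses_horizontally_trans)
  show "piercing_edge \<R> R1 R2 \<longleftrightarrow> crosses_horizontally R1 R2 \<or> crosses_horizontally R2 R1"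
    if "R1 \<in> \<R>" "R2 \<in> \<R>" "R1 \<noteq> R2" for R1 R2
    using that assms by (simp add: piercing_edge_def pierce_iff_crosses_horizontally)
qed

theorem theorem2:
  fixes \<R> :: "(real \<times> real) set set"
  assumes "finite \<R>"
    and "\<forall>R\<in>\<R>. is_rect R"
  shows "comparability_graph \<R> (piercing_edge \<R>)"
  using assms(2) by (rule comparability_graph_piercing_edge)

end
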